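(* Let $\mathcal{X}\subseteq\mathbb{R}^d$ be a nonempty closed convex set and consider the iterates $x_t,z_t$ and step sizes $\gamma_t$ of Algorithm AdaPEG (described in the context), run with arbitrary oracle answers $\widehat{F(x_t)}\in\mathbb{R}^d$. Then for every $t\ge1$, \[\langle\widehat{F(x_t)}-\widehat{F(x_{t-1})},x_t-z_t\rangle\le\frac1{\gamma_t}\left\|\widehat{F(x_t)}-\widehat{F(x_{t-1})}\right\|^2.\]
   Context: $\|\cdot\|$ is the Euclidean norm. Algorithm AdaPEG: $x_0=z_0\in\mathcal{X}$, $\gamma_0\ge0$, $\eta>0$. For $t=1,\dots,T$: $x_t=\arg\min_{u\in\mathcal{X}}\{\langle\widehat{F(x_{t-1})},u\rangle+\tfrac12\gamma_{t-1}\|u-z_{t-1}\|^2\}$; $\gamma_t=\frac1\eta\sqrt{\eta^2\gamma_0^2+\sum_{s=1}^t\|\widehat{F(x_s)}-\widehat{F(x_{s-1})}\|^2}$; $z_t=\arg\min_{u\in\mathcal{X}}\{\langle\widehat{F(x_t)},u\rangle+\tfrac12\gamma_{t-1}\|u-z_{t-1}\|^2+\tfrac12(\gamma_t-\gamma_{t-1})\|u-x_t\|^2\}$. *)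

theory Defs
  imports "HOL-Analysis.Analysis"
begin

definition is_minimizer :: "'a set \<Rightarrow> ('a \<Rightarrow> real) \<Rightarrow> 'a \<Rightarrow> bool" where
  "is_minimizer X phi u \<longleftrightarrow> u \<in> X \<and> (\<forall>v\<in>X. phi u \<le> phi v)"

text \<open>Iterates of AdaPEG with oracle answers g t (standing for the estimate of F at x t).\<close>
definition adapeg ::
  "('a::euclidean_space) set \<Rightarrow> real \<Rightarrow> (nat \<Rightarrow> 'a) \<Rightarrow> (nat \<Rightarrow> 'a) \<Rightarrow> (nat \<Rightarrow> 'a) \<Rightarrow> (nat \<Rightarrow> real) \<Rightarrow> bool"
where
  "adapeg X \<eta> g x z \<gamma> \<longleftrightarrow>
     x 0 \<in> X \<and> z 0 = x 0 \<and> \<gamma> 0 \<ge> 0 \<and>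
     (\<forall>t\<ge>1.
        is_minimizer X (\<lambda>u. inner (g (t - 1)) u + (1/2) * \<gamma> (t - 1) * (norm (u - z (t - 1)))\<^sup>2) (x t)
      \<and> \<gamma> t = (1/\<eta>) * sqrt (\<eta>\<^sup>2 * (\<gamma> 0)\<^sup>2 + (\<Sum>s=1..t. (norm (g s - g (s - 1)))\<^sup>2))
      \<and> is_minimizer X (\<lambda>u. inner (g t) u + (1/2) * \<gamma> (t - 1) * (norm (u - z (t - 1)))\<^sup>2
                              + (1/2) * (\<gamma> t - \<gamma> (t - 1)) * (norm (u - x t))\<^sup>2) (z t))"

end

theory Submission
  imports Defs
begin

text \<open>Both updates of AdaPEG minimise a linear function plus multiples of squared distances over
  the convex set X, so each satisfies the first-order variational inequality. Testing the one for
  x t with z t and the one for z t with x t and adding them, the terms with z (t - 1) cancel and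
  one gets  \<gamma> t |x t - z t|^2 \<le> <g t - g (t - 1), x t - z t>;  expanding
  |(g t - g (t - 1)) - \<gamma> t (x t - z t)|^2 \<ge> 0  then gives the claim. The degenerate case
  \<gamma> t = 0 forces g t = g (t - 1), because \<gamma> t dominates |g t - g (t - 1)| / \<eta>.\<close>

lemma linear_coeff_nonneg_if_quadratic_nonneg:
  fixes L Q :: real
  assumes "\<And>s. 0 < s \<Longrightarrow> s \<le> 1 \<Longrightarrow> 0 \<le> s * L + s\<^sup>2 * Q"
  shows "0 \<le> L"
proof (rule tendsto_lowerbound)
  show "((\<lambda>s. L + s * Q) \<longlongrightarrow> L) (at_right 0)"
    by (intro tendsto_eq_intros) auto
  have "\<forall>\<^sub>F s in at_right (0::real). 0 < s \<and> s \<le> 1"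
    using eventually_at_right_real[of 0 1] by (rule eventually_mono) auto
  then show "\<forall>\<^sub>F s in at_right 0. 0 \<le> L + s * Q"
  proof (rule eventually_mono)
    fix s :: real
    assume s: "0 < s \<and> s \<le> 1"
    then have "0 \<le> s * L + s\<^sup>2 * Q"
      using assms by simp
    also have "\<dots> = s * (L + s * Q)"
      by (simp add: power2_eq_square algebra_simps)
    finally show "0 \<le> L + s * Q"
      using s by (simp add: zero_le_mult_iff)
  qed
qed simp

lemma is_minimizer_convex_first_order:
  fixes f :: "'a::real_vector \<Rightarrow> real"
  assumes "convex X" and "is_minimizer X f x" and "u \<in> X"
    and "\<And>s. f (x + s *\<^sub>R (u - x)) = f x + s * L + s\<^sup>2 * Q"
  shows "0 \<le> L"
proof (rule linear_coeff_nonneg_if_quadratic_nonneg)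
  fix s :: real
  assume "0 < s" "s \<le> 1"
  have "x + s *\<^sub>R (u - x) = (1 - s) *\<^sub>R x + s *\<^sub>R u"
    by (simp add: algebra_simps)
  also have "\<dots> \<in> X"
    using assms(1-3) \<open>0 < s\<close> \<open>s \<le> 1\<close> by (simp add: is_minimizer_def convexD_alt)
  finally have "f x \<le> f (x + s *\<^sub>R (u - x))"
    using assms(2) by (simp add: is_minimizer_def)
  then show "0 \<le> s * L + s\<^sup>2 * Q"
    using assms(4) by simp
qed

lemma power2_norm_add_scaleR:
  fixes v w :: "'a::real_inner"
  shows "(norm (v + s *\<^sub>R w))\<^sup>2 = (norm v)\<^sup>2 + s * (2 * inner v w) + s\<^sup>2 * (norm w)\<^sup>2"
  unfolding power2_norm_eq_inner
  by (simp add: inner_add_left inner_add_right inner_commute power2_eq_square algebra_simps)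

lemma is_minimizer_prox_variational_inequality:
  fixes p b c :: "'a::real_inner"
  assumes "convex X" and "u \<in> X"
    and "is_minimizer X (\<lambda>v. inner p v + (1/2) * a * (norm (v - b))\<^sup>2
                              + (1/2) * e * (norm (v - c))\<^sup>2) x"
  shows "0 \<le> inner (p + a *\<^sub>R (x - b) + e *\<^sub>R (x - c)) (u - x)"
proof (rule is_minimizer_convex_first_order[OF assms(1,3,2)])
  fix s :: real
  have "\<And>y. x + s *\<^sub>R (u - x) - y = (x - y) + s *\<^sub>R (u - x)"
    by simp
  then show "inner p (x + s *\<^sub>R (u - x)) + (1/2) * a * (norm (x + s *\<^sub>R (u - x) - b))\<^sup>2
              + (1/2) * e * (norm (x + s *\<^sub>R (u - x) - c))\<^sup>2
      = inner p x + (1/2) * a * (norm (x - b))\<^sup>2 + (1/2) * e * (norm (x - c))\<^sup>2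
        + s * inner (p + a *\<^sub>R (x - b) + e *\<^sub>R (x - c)) (u - x)
        + s\<^sup>2 * ((1/2) * (a + e) * (norm (u - x))\<^sup>2)"
    by (simp only: power2_norm_add_scaleR) (simp add: inner_add_left inner_add_right algebra_simps)
qed

lemma mult_inner_le_power2_norm:
  fixes v w :: "'a::real_inner"
  assumes "0 \<le> c" and "c * (norm w)\<^sup>2 \<le> inner v w"
  shows "c * inner v w \<le> (norm v)\<^sup>2"
proof -
  have "0 \<le> (norm (v + (- c) *\<^sub>R w))\<^sup>2"
    by simp
  also have "\<dots> = (norm v)\<^sup>2 - 2 * c * inner v w + c * (c * (norm w)\<^sup>2)"
    unfolding power2_norm_add_scaleR by (simp add: power2_eq_square algebra_simps)
  also have "\<dots> \<le> (norm v)\<^sup>2 - c * inner v w"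
    using mult_left_mono[OF assms(2,1)] by simp
  finally show ?thesis
    by simp
qed

lemma adapeg_norm_diff_le:
  assumes "adapeg X \<eta> g x z \<gamma>" and "\<eta> > 0" and "t \<ge> 1"
  shows "norm (g t - g (t - 1)) \<le> \<eta> * \<gamma> t"
proof -
  let ?S = "\<Sum>s=1..t. (norm (g s - g (s - 1)))\<^sup>2"
  have "\<eta> * \<gamma> t = sqrt (\<eta>\<^sup>2 * (\<gamma> 0)\<^sup>2 + ?S)"
    using assms unfolding adapeg_def by simp
  moreover have "(norm (g t - g (t - 1)))\<^sup>2 \<le> ?S"
    using \<open>t \<ge> 1\<close> by (intro member_le_sum) auto
  then have "(norm (g t - g (t - 1)))\<^sup>2 \<le> \<eta>\<^sup>2 * (\<gamma> 0)\<^sup>2 + ?S"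
    by (intro add_increasing) auto
  ultimately show ?thesis
    by (metis real_le_rsqrt)
qed

lemma adapeg_step_inner_lower_bound:
  assumes "adapeg X \<eta> g x z \<gamma>" and "convex X" and "t \<ge> 1"
  shows "\<gamma> t * (norm (x t - z t))\<^sup>2 \<le> inner (g t - g (t - 1)) (x t - z t)"
proof -
  let ?a = "\<gamma> (t - 1)" and ?c = "\<gamma> t"
  have min_x: "is_minimizer X (\<lambda>v. inner (g (t - 1)) v + (1/2) * ?a * (norm (v - z (t - 1)))\<^sup>2
                                 + (1/2) * 0 * (norm (v - z t))\<^sup>2) (x t)"
   and min_z: "is_minimizer X (\<lambda>v. inner (g t) v + (1/2) * ?a * (norm (v - z (t - 1)))\<^sup>2
                                 + (1/2) * (?c - ?a) * (norm (v - x t))\<^sup>2) (z t)"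
    using assms(1,3) unfolding adapeg_def by auto
  then have "x t \<in> X" "z t \<in> X"
    by (simp_all add: is_minimizer_def)
  have "0 \<le> inner (g (t - 1) + ?a *\<^sub>R (x t - z (t - 1))) (z t - x t)"
    using is_minimizer_prox_variational_inequality[OF assms(2) \<open>z t \<in> X\<close> min_x] by simp
  moreover have "0 \<le> inner (g t + ?a *\<^sub>R (z t - z (t - 1)) + (?c - ?a) *\<^sub>R (z t - x t)) (x t - z t)"
    using is_minimizer_prox_variational_inequality[OF assms(2) \<open>x t \<in> X\<close> min_z] .
  ultimately show ?thesis
    unfolding power2_norm_eq_inner
    by (simp add: inner_add_left inner_diff_left inner_diff_right inner_commute algebra_simps)
qed

theorem lemmaB4:
  fixes X :: "('a::euclidean_space) set" and \<eta> :: real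
    and g x z :: "nat \<Rightarrow> 'a" and \<gamma> :: "nat \<Rightarrow> real" and t :: nat
  assumes "X \<noteq> {}" and "closed X" and "convex X" and "\<eta> > 0"
    and "adapeg X \<eta> g x z \<gamma>"
    and "t \<ge> 1"
  shows "inner (g t - g (t - 1)) (x t - z t) \<le> (1 / \<gamma> t) * (norm (g t - g (t - 1)))\<^sup>2"
proof -
  have bound: "norm (g t - g (t - 1)) \<le> \<eta> * \<gamma> t"
    using adapeg_norm_diff_le assms(4-6) by blast
  show ?thesis
  proof (cases "\<gamma> t = 0")
    case True
    with bound show ?thesis
      by simp
  next
    case False
    have "0 \<le> \<eta> * \<gamma> t"
      using norm_ge_zero bound by (rule order_trans)
    with \<open>\<eta> > 0\<close> False have "\<gamma> t > 0"
      by (simp add: zero_le_mult_iff)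
    with adapeg_step_inner_lower_bound[OF assms(5,3,6)]
    have "\<gamma> t * inner (g t - g (t - 1)) (x t - z t) \<le> (norm (g t - g (t - 1)))\<^sup>2"
      by (intro mult_inner_le_power2_norm) auto
    with \<open>\<gamma> t > 0\<close> show ?thesis
      by (simp add: field_simps)
  qed
qed

end
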